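(* For every iteration index $j\ge1$ generated during the $l$-th cycle of RPF-SFISTA, $\|\xi_j-z_{l-1}\|^2\le C_{\bar\mu}(z_{l-1})$.
   Context: Setup. Let $f:\mathbb R^n\to\mathbb R$ be convex and differentiable with $\|\nabla f(z')-\nabla f(z)\|\le\bar L\|z'-z\|$ for all $z,z'\in\mathbb R^n$ (some $\bar L\ge0$). Let $h:\mathbb R^n\to(-\infty,\infty]$ be proper, lower semicontinuous and convex with domain $\mathcal H$. Let $\phi:=f+h$ be $\bar\mu$-strongly convex for some $\bar\mu>0$, with (unique) minimizer $z^*$. Write $\ell_f(u;x):=f(x)+\langle\nabla f(x),u-x\rangle$. Define $C_{\bar\mu}(z):=\frac{8}{\bar\mu}[\phi(z)-\phi(z^* )]$. RPF-SFISTA. Parameters $\chi\in(0,1)$, $\beta>1$; inputs $\mu_0>0$, $\bar M_0>0$, $z_0\in\mathcal H$, $\hat\epsilon>0$. The method runs in cycles $l=1,2,\dots$. At the start of cycle $l$: choose $\underline M_l\in[\max\{\bar M_{l-1}/4,\bar M_0\},\bar M_{l-1}]$ (so $\underline M_1=\bar M_0$), set $\mu:=\mu_{l-1}$, $x_0:=z_{l-1}$, $\xi_0:=y_0:=x_0$, $A_0:=0$, $\tau_0:=1$, $L_0:=\underline M_l$. Then for $j=1,2,\dots$: (i) set $L_j:=L_{j-1}$; (ii) compute $a_{j-1}=\frac{\tau_{j-1}+\sqrt{\tau_{j-1}^2+4\tau_{j-1}A_{j-1}L_j}}{2L_j}$, $\tilde x_{j-1}=\frac{A_{j-1}y_{j-1}+a_{j-1}x_{j-1}}{A_{j-1}+a_{j-1}}$,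 $y_j=\arg\min_{u}\{\ell_f(u;\tilde x_{j-1})+h(u)+\frac{L_j}{2}\|u-\tilde x_{j-1}\|^2\}$; if $f(y_j)\le\ell_f(y_j;\tilde x_{j-1})+\frac{(1-\chi)L_j}{4}\|y_j-\tilde x_{j-1}\|^2$ go to (iii), otherwise replace $L_j$ by $\beta L_j$ and repeat (ii); (iii) set $\xi_j:=y_j$ if $\phi(y_j)\le\phi(\xi_{j-1})$ and $\xi_j:=\xi_{j-1}$ otherwise; $A_j:=A_{j-1}+a_{j-1}$; $\tau_j:=\tau_{j-1}+a_{j-1}\mu/2$; $s_j:=L_j(\tilde x_{j-1}-y_j)$; $x_j:=\tau_j^{-1}[\mu a_{j-1}y_j/2+\tau_{j-1}x_{j-1}-a_{j-1}s_j]$; $v_j:=\nabla f(y_j)-\nabla f(\tilde x_{j-1})+s_j$; (iv) if $\|\xi_j-x_0\|^2<\chi A_jL_j\|y_j-\tilde x_{j-1}\|^2$, the cycle ends with a restart: set $z_l:=\xi_j$, $\bar M_l:=L_j$, $\mu_l:=\mu/2$ and start cycle $l+1$; (v) otherwise, if $\|v_j\|\le\hat\epsilon$, stop and output $(y,v,\xi,L):=(y_j,v_j,\xi_j,L_j)$; else go to iteration $j+1$. *)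

theory Defs
  imports "HOL-Analysis.Analysis"
begin

(* An extended-real-valued h : R^n -> (-inf,inf] is represented by its domain
   H (the set where h < inf) together with its finite values h on H. *)

(* lower semicontinuity of the extended function (= +inf off H): closed epigraph *)
definition lsc_ext :: "'a::euclidean_space set \<Rightarrow> ('a \<Rightarrow> real) \<Rightarrow> bool" where
  "lsc_ext H h \<longleftrightarrow> closed {(x, t). x \<in> H \<and> h x \<le> t}"

definition proper_lsc_convex :: "'a::euclidean_space set \<Rightarrow> ('a \<Rightarrow> real) \<Rightarrow> bool" where
  "proper_lsc_convex H h \<longleftrightarrow> H \<noteq> {} \<and> convex H \<and> convex_on H h \<and> lsc_ext H h"

definition strongly_convex_on :: "'a::euclidean_space set \<Rightarrow> real \<Rightarrow> ('a \<Rightarrow> real) \<Rightarrow> bool" where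
  "strongly_convex_on H mu p \<longleftrightarrow> convex H \<and>
     (\<forall>x\<in>H. \<forall>y\<in>H. \<forall>t::real. 0 \<le> t \<and> t \<le> 1 \<longrightarrow>
        p (t *\<^sub>R x + (1 - t) *\<^sub>R y) \<le> t * p x + (1 - t) * p y - mu / 2 * t * (1 - t) * (norm (x - y))\<^sup>2)"

(* linearization  l_f(u; x) = f x + <grad f x, u - x> ; g is the gradient of f *)
definition lin_f :: "('a::euclidean_space \<Rightarrow> real) \<Rightarrow> ('a \<Rightarrow> 'a) \<Rightarrow> 'a \<Rightarrow> 'a \<Rightarrow> real" where
  "lin_f f g x u = f x + inner (g x) (u - x)"

definition C_mu :: "real \<Rightarrow> ('a \<Rightarrow> real) \<Rightarrow> 'a \<Rightarrow> 'a \<Rightarrow> real" where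
  "C_mu mub phi zs z = 8 / mub * (phi z - phi zs)"

definition prox_pt :: "('a::euclidean_space \<Rightarrow> real) \<Rightarrow> ('a \<Rightarrow> 'a) \<Rightarrow> ('a \<Rightarrow> real) \<Rightarrow> 'a set
                       \<Rightarrow> real \<Rightarrow> 'a \<Rightarrow> 'a" where
  "prox_pt f g h H L xt = (SOME u. u \<in> H \<and> (\<forall>w\<in>H.
      lin_f f g xt u + h u + L / 2 * (norm (u - xt))\<^sup>2 \<le> lin_f f g xt w + h w + L / 2 * (norm (w - xt))\<^sup>2))"

record 'a rstate =
  rs_cyc :: nat
  rs_it  :: nat
  rs_x0  :: 'a       (* x_0 = z_{l-1} *)
  rs_mu  :: real     (* mu = mu_{l-1} *)
  rs_A   :: real
  rs_tau :: real
  rs_L   :: real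
  rs_x   :: 'a
  rs_y   :: 'a
  rs_xi  :: 'a
  rs_xt  :: 'a       (* tilde x_{j-1} *)
  rs_v   :: 'a

definition cycle_start :: "nat \<Rightarrow> 'a::euclidean_space \<Rightarrow> real \<Rightarrow> real \<Rightarrow> 'a rstate" where
  "cycle_start l z mu M = \<lparr> rs_cyc = l, rs_it = 0, rs_x0 = z, rs_mu = mu, rs_A = 0, rs_tau = 1,
      rs_L = M, rs_x = z, rs_y = z, rs_xi = z, rs_xt = z, rs_v = 0 \<rparr>"

definition trial_L :: "real \<Rightarrow> 'a rstate \<Rightarrow> nat \<Rightarrow> real" where
  "trial_L beta s k = beta ^ k * rs_L s"

definition trial_a :: "real \<Rightarrow> 'a rstate \<Rightarrow> nat \<Rightarrow> real" where
  "trial_a beta s k = (let L = trial_L beta s k; tau = rs_tau s; A = rs_A s in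
      (tau + sqrt (tau\<^sup>2 + 4 * tau * A * L)) / (2 * L))"

definition trial_xt :: "real \<Rightarrow> 'a::euclidean_space rstate \<Rightarrow> nat \<Rightarrow> 'a" where
  "trial_xt beta s k = (let a = trial_a beta s k; A = rs_A s in
      (1 / (A + a)) *\<^sub>R (A *\<^sub>R rs_y s + a *\<^sub>R rs_x s))"

definition trial_y :: "('a::euclidean_space \<Rightarrow> real) \<Rightarrow> ('a \<Rightarrow> 'a) \<Rightarrow> ('a \<Rightarrow> real) \<Rightarrow> 'a set
                        \<Rightarrow> real \<Rightarrow> 'a rstate \<Rightarrow> nat \<Rightarrow> 'a" where
  "trial_y f g h H beta s k = prox_pt f g h H (trial_L beta s k) (trial_xt beta s k)"

definition bt_ok :: "('a::euclidean_space \<Rightarrow> real) \<Rightarrow> ('a \<Rightarrow> 'a) \<Rightarrow> ('a \<Rightarrow> real) \<Rightarrow> 'a set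
                      \<Rightarrow> real \<Rightarrow> real \<Rightarrow> 'a rstate \<Rightarrow> nat \<Rightarrow> bool" where
  "bt_ok f g h H chi beta s k = (let L = trial_L beta s k; xt = trial_xt beta s k;
      y = trial_y f g h H beta s k in
      f y \<le> lin_f f g xt y + (1 - chi) * L / 4 * (norm (y - xt))\<^sup>2)"

definition next_state :: "('a::euclidean_space \<Rightarrow> real) \<Rightarrow> ('a \<Rightarrow> 'a) \<Rightarrow> ('a \<Rightarrow> real) \<Rightarrow> 'a set
                      \<Rightarrow> real \<Rightarrow> 'a rstate \<Rightarrow> nat \<Rightarrow> 'a rstate" where
  "next_state f g h H beta s k = (let L = trial_L beta s k; a = trial_a beta s k;
      xt = trial_xt beta s k; y = trial_y f g h H beta s k; mu = rs_mu s;
      tau' = rs_tau s + a * mu / 2; sj = L *\<^sub>R (xt - y) in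
      s\<lparr> rs_it := Suc (rs_it s),
         rs_A := rs_A s + a,
         rs_tau := tau',
         rs_L := L,
         rs_x := (1 / tau') *\<^sub>R ((mu * a / 2) *\<^sub>R y + rs_tau s *\<^sub>R rs_x s - a *\<^sub>R sj),
         rs_y := y,
         rs_xi := (if f y + h y \<le> f (rs_xi s) + h (rs_xi s) then y else rs_xi s),
         rs_xt := xt,
         rs_v := g y - g xt + sj \<rparr>)"

definition restart_test :: "real \<Rightarrow> 'a::euclidean_space rstate \<Rightarrow> bool" where
  "restart_test chi s \<longleftrightarrow> 1 \<le> rs_it s \<and>
     (norm (rs_xi s - rs_x0 s))\<^sup>2 < chi * rs_A s * rs_L s * (norm (rs_y s - rs_xt s))\<^sup>2"

definition continue_test :: "real \<Rightarrow> real \<Rightarrow> 'a::euclidean_space rstate \<Rightarrow> bool" where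
  "continue_test chi eps s \<longleftrightarrow> rs_it s = 0 \<or> (\<not> restart_test chi s \<and> norm (rs_v s) > eps)"

inductive rpf_reach :: "('a::euclidean_space \<Rightarrow> real) \<Rightarrow> ('a \<Rightarrow> 'a) \<Rightarrow> ('a \<Rightarrow> real) \<Rightarrow> 'a set
      \<Rightarrow> real \<Rightarrow> real \<Rightarrow> real \<Rightarrow> real \<Rightarrow> 'a \<Rightarrow> real \<Rightarrow> 'a rstate \<Rightarrow> bool"
  for f g h H chi beta mu0 M0 z0 eps where
  init: "rpf_reach f g h H chi beta mu0 M0 z0 eps (cycle_start 1 z0 mu0 M0)"
| step: "rpf_reach f g h H chi beta mu0 M0 z0 eps s \<Longrightarrow> continue_test chi eps s \<Longrightarrow>
         (\<exists>k. bt_ok f g h H chi beta s k) \<Longrightarrow>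
         rpf_reach f g h H chi beta mu0 M0 z0 eps
           (next_state f g h H beta s (LEAST k. bt_ok f g h H chi beta s k))"
| restart: "rpf_reach f g h H chi beta mu0 M0 z0 eps s \<Longrightarrow> restart_test chi s \<Longrightarrow>
         max (rs_L s / 4) M0 \<le> M \<Longrightarrow> M \<le> rs_L s \<Longrightarrow>
         rpf_reach f g h H chi beta mu0 M0 z0 eps
           (cycle_start (Suc (rs_cyc s)) (rs_xi s) (rs_mu s / 2) M)"

end

theory Submission
  imports Defs
begin

text \<open>
  The candidate \<open>\<xi>\<close> only changes to points of smaller objective, so \<open>\<phi>(\<xi>\<^sub>j) \<le> \<phi>(x\<^sub>0)\<close>.
  Quadratic growth of the \<open>\<mu>\<close>-strongly convex \<open>\<phi>\<close> around its minimizer \<open>z\<^sup>*\<close> bounds both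
  \<open>\<parallel>\<xi>\<^sub>j - z\<^sup>*\<parallel>\<^sup>2\<close> and \<open>\<parallel>x\<^sub>0 - z\<^sup>*\<parallel>\<^sup>2\<close> by \<open>(2/\<mu>)(\<phi>(x\<^sub>0) - \<phi>(z\<^sup>*))\<close>, and
  \<open>\<parallel>a + b\<parallel>\<^sup>2 \<le> 2\<parallel>a\<parallel>\<^sup>2 + 2\<parallel>b\<parallel>\<^sup>2\<close> gives the constant \<open>8/\<mu>\<close>.
  For \<open>\<phi>(\<xi>\<^sub>j)\<close> to mean anything, the prox points must lie in the domain \<open>H\<close> of \<open>h\<close>, i.e. the
  prox subproblem must have a minimizer: this is where lower semicontinuity and convexity of \<open>h\<close>
  enter, via an affine-in-the-norm minorant that makes the subproblem coercive.
\<close>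

lemma closed_epigraph_bounded_below_on_compact:
  fixes h :: "'a::euclidean_space \<Rightarrow> real"
  assumes cl: "closed {(x, t). x \<in> H \<and> h x \<le> t}" and K: "compact K"
  shows "\<exists>m. \<forall>u\<in>H \<inter> K. m \<le> h u"
proof (rule ccontr)
  assume "\<not> ?thesis"
  hence unbounded: "\<And>m. \<exists>u\<in>H \<inter> K. h u < m" by (auto simp: not_le)
  define C where "C n = (\<lambda>u. (u, - real n)) -` {(x, t). x \<in> H \<and> h x \<le> t}" for n :: nat
  have "K \<inter> \<Inter>(range C) \<noteq> {}"
  proof (rule compact_imp_fip[OF K])
    show "\<And>T. T \<in> range C \<Longrightarrow> closed T"
      unfolding C_def
      by (auto intro!: closed_vimage[OF cl] continuous_intros simp del: vimage_Collect_eq)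
    fix F' assume "finite F'" "F' \<subseteq> range C"
    then obtain N where N: "finite N" "F' = C ` N" by (meson finite_subset_image)
    obtain u where u: "u \<in> H \<inter> K" "h u < - real (Max (insert 0 N))" using unbounded by blast
    have "u \<in> C k" if "k \<in> N" for k
    proof -
      have "k \<le> Max (insert 0 N)" using N(1) that by simp
      thus ?thesis using u unfolding C_def by auto
    qed
    thus "K \<inter> \<Inter>F' \<noteq> {}" using u N by auto
  qed
  then obtain x where x: "\<And>n. x \<in> C n" by auto
  obtain n :: nat where "- h x < real n" using reals_Archimedean2 by blast
  with x[of n] show False unfolding C_def by auto
qed

text \<open>Convexity propagates the lower bound on the unit ball around \<open>p\<close> to all of \<open>H\<close>,
  decaying at most linearly in the distance to \<open>p\<close>.\<close>

lemma convex_closed_epigraph_cone_minorant: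
  fixes h :: "'a::euclidean_space \<Rightarrow> real"
  assumes cl: "closed {(x, t). x \<in> H \<and> h x \<le> t}" and cvx: "convex H" "convex_on H h"
    and p: "p \<in> H"
  shows "\<exists>m c. c \<ge> 0 \<and> (\<forall>u\<in>H. m - c * norm (u - p) \<le> h u)"
proof -
  obtain m0 where "\<forall>u\<in>H \<inter> cball p 1. m0 \<le> h u"
    using closed_epigraph_bounded_below_on_compact[OF cl compact_cball] by blast
  hence m0: "\<And>u. u \<in> H \<Longrightarrow> norm (u - p) \<le> 1 \<Longrightarrow> m0 \<le> h u"
    by (simp add: dist_norm norm_minus_commute)
  have m0p: "m0 \<le> h p" using m0[OF p] by simp
  define c where "c = h p - m0"
  have "m0 - c * norm (u - p) \<le> h u" if u: "u \<in> H" for u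
  proof (cases "norm (u - p) \<le> 1")
    case True
    thus ?thesis using m0[OF u] m0p c_def by (smt (verit) mult_nonneg_nonneg norm_ge_zero)
  next
    case False
    define d where "d = norm (u - p)"
    define t where "t = 1 / d"
    have d1: "d > 1" using False d_def by simp
    have t01: "0 < t" "t < 1" using d1 t_def by auto
    define w where "w = t *\<^sub>R u + (1 - t) *\<^sub>R p"
    have wH: "w \<in> H" using cvx(1) u p t01 unfolding w_def convex_def by simp
    have "w - p = t *\<^sub>R (u - p)" unfolding w_def by (simp add: algebra_simps)
    hence "norm (w - p) = 1" using t01 d1 unfolding t_def d_def by simp
    hence "m0 \<le> h w" using m0 wH by simp
    also have "h w \<le> t * h u + (1 - t) * h p"
      using convex_onD[OF cvx(2), of "1 - t" u p] t01 u p unfolding w_def by simp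
    finally have "d * (m0 - h p) \<le> d * (t * (h u - h p))"
      using d1 by (intro mult_left_mono) (auto simp: algebra_simps)
    also have "\<dots> = h u - h p" using d1 t_def by simp
    finally show ?thesis using m0p unfolding c_def d_def by (simp add: algebra_simps)
  qed
  moreover have "c \<ge> 0" using m0p c_def by simp
  ultimately show ?thesis by blast
qed

text \<open>Minimize the continuous map \<open>(w, t) \<mapsto> c w + t\<close> over the compact part of the epigraph
  lying above the bounded sublevel set.\<close>

lemma closed_epigraph_plus_continuous_attains_min:
  fixes h c :: "'a::euclidean_space \<Rightarrow> real"
  assumes cl: "closed {(x, t). x \<in> H \<and> h x \<le> t}" and cont: "continuous_on UNIV c"
    and p: "p \<in> H" and bdd: "bounded {w \<in> H. c w + h w \<le> c p + h p}"
  shows "\<exists>u\<in>H. \<forall>w\<in>H. c u + h u \<le> c w + h w"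
proof -
  define E where "E = {(x, t). x \<in> H \<and> h x \<le> t}"
  obtain R q where R: "{w \<in> H. c w + h w \<le> c p + h p} \<subseteq> cball q R"
    using bdd unfolding bounded_subset_cball by blast
  obtain mh where mh: "\<forall>u\<in>H \<inter> cball q R. mh \<le> h u"
    using closed_epigraph_bounded_below_on_compact[OF cl compact_cball, of q R] by blast
  have "p \<in> cball q R" using R p by auto
  hence ne: "cball q R \<noteq> {}" by blast
  have "continuous_on (cball q R) c" using cont by (rule continuous_on_subset) simp
  then obtain v where v: "\<forall>u\<in>cball q R. c v \<le> c u"
    using continuous_attains_inf[OF compact_cball ne] by blast
  define T where "T = c p + h p - c v"
  define S where "S = E \<inter> (cball q R \<times> {..T})"
  have inS: "(w, h w) \<in> S" if "w \<in> H" "c w + h w \<le> c p + h p" for w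
  proof -
    have "w \<in> cball q R" using that R by blast
    thus ?thesis using that v unfolding S_def E_def T_def by force
  qed
  have "compact S"
  proof (rule compact_eq_bounded_closed[THEN iffD2, OF conjI])
    show "closed S" unfolding S_def E_def using cl by (intro closed_Int closed_Times) auto
    have "S \<subseteq> cball q R \<times> {mh..T}" unfolding S_def E_def using mh by force
    thus "bounded S" by (rule bounded_subset[rotated]) (auto intro: bounded_Times)
  qed
  moreover have "S \<noteq> {}" using inS[OF p] by auto
  moreover have "continuous_on S (\<lambda>z. c (fst z) + snd z)"
    by (intro continuous_on_add continuous_on_snd continuous_on_id continuous_on_fst
        continuous_on_compose2[OF cont]) auto
  ultimately obtain z where z: "z \<in> S" "\<And>y. y \<in> S \<Longrightarrow> c (fst z) + snd z \<le> c (fst y) + snd y"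
    using continuous_attains_inf[of S "\<lambda>z. c (fst z) + snd z"] by blast
  have u: "fst z \<in> H" "h (fst z) \<le> snd z" using z(1) unfolding S_def E_def by auto
  have "c (fst z) + h (fst z) \<le> c w + h w" if w: "w \<in> H" for w
  proof (cases "c w + h w \<le> c p + h p")
    case True
    thus ?thesis using u z(2)[OF inS[OF w True]] by simp
  next
    case False
    thus ?thesis using u z(2)[OF inS[OF p]] by simp
  qed
  thus ?thesis using u(1) by blast
qed

lemma quadratic_le_linear_imp_bounded:
  fixes a B D d :: real
  assumes "a > 0" "B \<ge> 0" "a * d\<^sup>2 \<le> D + B * d"
  shows "d \<le> 1 + (\<bar>D\<bar> + B) / a"
proof (cases "d \<le> 1")
  case True thus ?thesis using assms by (simp add: add_increasing2)
next
  case False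
  have "D \<le> \<bar>D\<bar> * d" using False abs_ge_self[of D] by (smt (verit) abs_ge_zero mult_le_cancel_left1)
  hence "a * d * d \<le> (\<bar>D\<bar> + B) * d"
    using assms(3) by (simp add: power2_eq_square algebra_simps)
  hence "a * d \<le> \<bar>D\<bar> + B" using False by simp
  thus ?thesis using assms(1) by (simp add: field_simps)
qed

lemma convex_closed_epigraph_prox_exists:
  fixes h :: "'a::euclidean_space \<Rightarrow> real"
  assumes cl: "closed {(x, t). x \<in> H \<and> h x \<le> t}" and cvx: "convex H" "convex_on H h"
    and ne: "H \<noteq> {}" and L: "L > 0"
  shows "\<exists>u\<in>H. \<forall>w\<in>H. inner G (u - xt) + L / 2 * (norm (u - xt))\<^sup>2 + h u
            \<le> inner G (w - xt) + L / 2 * (norm (w - xt))\<^sup>2 + h w"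
proof -
  define c where "c w = inner G (w - xt) + L / 2 * (norm (w - xt))\<^sup>2" for w
  obtain p where p: "p \<in> H" using ne by blast
  obtain m k where mk: "k \<ge> 0" "\<And>u. u \<in> H \<Longrightarrow> m - k * norm (u - p) \<le> h u"
    using convex_closed_epigraph_cone_minorant[OF cl cvx p] by blast
  define D where "D = c p + h p - m + k * norm (p - xt)"
  have "norm (w - xt) \<le> 1 + (\<bar>D\<bar> + (k + norm G)) / (L / 2)"
    if w: "w \<in> H" "c w + h w \<le> c p + h p" for w
  proof (rule quadratic_le_linear_imp_bounded)
    have "norm (w - p) \<le> norm (w - xt) + norm (p - xt)"
      using norm_triangle_ineq4[of "w - xt" "p - xt"] by simp
    hence "m - k * (norm (w - xt) + norm (p - xt)) \<le> h w"
      using mk(2)[OF w(1)] mult_left_mono[OF _ mk(1)] by (smt (verit))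
    moreover have "- (norm G * norm (w - xt)) \<le> inner G (w - xt)"
      using Cauchy_Schwarz_ineq2[of G "w - xt"] by linarith
    ultimately show "L / 2 * (norm (w - xt))\<^sup>2 \<le> D + (k + norm G) * norm (w - xt)"
      using w(2) unfolding c_def D_def by (simp add: algebra_simps)
  qed (use L mk(1) in auto)
  hence "bounded {w \<in> H. c w + h w \<le> c p + h p}"
    by (intro boundedI[where B = "norm xt + 1 + (\<bar>D\<bar> + (k + norm G)) / (L / 2)"])
      (smt (verit) mem_Collect_eq norm_triangle_ineq2)
  moreover have "continuous_on UNIV c" unfolding c_def by (intro continuous_intros)
  ultimately show ?thesis
    using closed_epigraph_plus_continuous_attains_min[OF cl _ p] unfolding c_def by blast
qed

lemma prox_pt_in_domain:
  fixes h :: "'a::euclidean_space \<Rightarrow> real"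
  assumes "proper_lsc_convex H h" and "L > 0"
  shows "prox_pt f g h H L xt \<in> H"
proof -
  obtain u where u: "u \<in> H" "\<forall>w\<in>H. inner (g xt) (u - xt) + L / 2 * (norm (u - xt))\<^sup>2 + h u
            \<le> inner (g xt) (w - xt) + L / 2 * (norm (w - xt))\<^sup>2 + h w"
    using assms convex_closed_epigraph_prox_exists[of H h L "g xt" xt]
    unfolding proper_lsc_convex_def lsc_ext_def by blast
  have "lin_f f g xt u + h u + L / 2 * (norm (u - xt))\<^sup>2
      \<le> lin_f f g xt w + h w + L / 2 * (norm (w - xt))\<^sup>2" if "w \<in> H" for w
    using bspec[OF u(2) that] unfolding lin_f_def by linarith
  hence "\<exists>u. u \<in> H \<and> (\<forall>w\<in>H. lin_f f g xt u + h u + L / 2 * (norm (u - xt))\<^sup>2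
            \<le> lin_f f g xt w + h w + L / 2 * (norm (w - xt))\<^sup>2)"
    using u(1) by blast
  from someI_ex[OF this] show ?thesis unfolding prox_pt_def by blast
qed

lemma rpf_reach_xi_descent:
  fixes h :: "'a::euclidean_space \<Rightarrow> real"
  assumes "rpf_reach f g h H chi beta mu0 M0 z0 eps s"
    and hprop: "proper_lsc_convex H h" and par: "beta > 1" "M0 > 0" "z0 \<in> H"
  shows "rs_x0 s \<in> H \<and> rs_xi s \<in> H \<and> f (rs_xi s) + h (rs_xi s) \<le> f (rs_x0 s) + h (rs_x0 s)
    \<and> rs_L s > 0"
  using assms(1)
proof (induction rule: rpf_reach.induct)
  case (step s)
  define k where "k = (LEAST k. bt_ok f g h H chi beta s k)"
  have L: "trial_L beta s k > 0" using step.IH par unfolding trial_L_def by simp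
  have "trial_y f g h H beta s k \<in> H" unfolding trial_y_def by (rule prox_pt_in_domain[OF hprop L])
  thus ?case using step.IH L unfolding k_def[symmetric] by (simp add: next_state_def Let_def)
qed (use par in \<open>simp_all add: cycle_start_def\<close>)

lemma strongly_convex_on_quadratic_growth:
  fixes p :: "'a::euclidean_space \<Rightarrow> real"
  assumes sc: "strongly_convex_on H mu p"
    and zs: "zs \<in> H" "\<And>z. z \<in> H \<Longrightarrow> p zs \<le> p z" and z: "z \<in> H"
  shows "mu / 2 * (norm (z - zs))\<^sup>2 \<le> p z - p zs"
proof -
  have "mu / 2 * t * (1 - t) * (norm (z - zs))\<^sup>2 \<le> t * (p z - p zs)"
    if t: "0 \<le> t" "t \<le> 1" for t
  proof -
    have "t *\<^sub>R z + (1 - t) *\<^sub>R zs \<in> H"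
      using sc z zs(1) t unfolding strongly_convex_on_def convex_def by simp
    hence "p zs \<le> p (t *\<^sub>R z + (1 - t) *\<^sub>R zs)" by (rule zs(2))
    also have "\<dots> \<le> t * p z + (1 - t) * p zs - mu / 2 * t * (1 - t) * (norm (z - zs))\<^sup>2"
      using sc z zs(1) t unfolding strongly_convex_on_def by simp
    finally show ?thesis by (simp add: algebra_simps)
  qed
  hence "mu / 2 * (1 - t) * (norm (z - zs))\<^sup>2 \<le> p z - p zs" if "0 < t" "t \<le> 1" for t
    using that by (smt (verit) mult.assoc mult.commute mult_le_cancel_left_pos)
  hence ev: "\<forall>\<^sub>F t in at_right 0. mu / 2 * (1 - t) * (norm (z - zs))\<^sup>2 \<le> p z - p zs"
    by (auto simp: eventually_at_right_field intro!: exI[of _ 1])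
  have "((\<lambda>t. mu / 2 * (1 - t) * (norm (z - zs))\<^sup>2) \<longlongrightarrow> mu / 2 * (norm (z - zs))\<^sup>2)
      (at_right 0)"
    by (auto intro!: tendsto_eq_intros)
  from tendsto_upperbound[OF this ev] show ?thesis by simp
qed

theorem lemmaA1:
  fixes f h :: "'a::euclidean_space \<Rightarrow> real" and g :: "'a \<Rightarrow> 'a" and H :: "'a set"
    and Lbar mubar chi beta mu0 M0 eps :: real and z0 zs :: 'a and s :: "'a rstate"
  assumes grad: "\<And>x. (f has_derivative (\<lambda>d. inner (g x) d)) (at x)"
    and fconv: "convex_on UNIV f"
    and Lip: "Lbar \<ge> 0" "\<And>z z'. norm (g z' - g z) \<le> Lbar * norm (z' - z)"
    and hprop: "proper_lsc_convex H h"
    and mub: "mubar > 0" and sconv: "strongly_convex_on H mubar (\<lambda>z. f z + h z)"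
    and zs: "zs \<in> H" "\<And>z. z \<in> H \<Longrightarrow> f zs + h zs \<le> f z + h z"
    and par: "0 < chi" "chi < 1" "beta > 1" "mu0 > 0" "M0 > 0" "z0 \<in> H" "eps > 0"
    and reach: "rpf_reach f g h H chi beta mu0 M0 z0 eps s"
    and j: "rs_it s \<ge> 1"
  shows "(norm (rs_xi s - rs_x0 s))\<^sup>2 \<le> C_mu mubar (\<lambda>z. f z + h z) zs (rs_x0 s)"
proof -
  define phi where "phi = (\<lambda>z. f z + h z)"
  define xi where "xi = rs_xi s"
  define x0 where "x0 = rs_x0 s"
  have inv: "x0 \<in> H" "xi \<in> H" "phi xi \<le> phi x0"
    using rpf_reach_xi_descent[OF reach hprop par(3,5,6)] unfolding phi_def xi_def x0_def by auto
  have growth: "mubar / 2 * (norm (z - zs))\<^sup>2 \<le> phi z - phi zs" if "z \<in> H" for z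
    using strongly_convex_on_quadratic_growth[OF sconv zs that] unfolding phi_def .
  have "(norm (xi - x0))\<^sup>2 \<le> (norm (xi - zs) + norm (x0 - zs))\<^sup>2"
    using norm_triangle_ineq4[of "xi - zs" "x0 - zs"] by (simp add: power_mono)
  also have "\<dots> \<le> 2 * (norm (xi - zs))\<^sup>2 + 2 * (norm (x0 - zs))\<^sup>2"
    by (smt (verit) sum_squares_bound power2_sum)
  also have "\<dots> \<le> 8 / mubar * (phi x0 - phi zs)"
    using growth[OF inv(1)] growth[OF inv(2)] inv(3) mub by (simp add: field_simps)
  finally show ?thesis unfolding C_mu_def phi_def xi_def x0_def .
qed

end
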